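(* Let $\bm{\lambda}=\{\bm{\lambda}_k\}_{k\in\mathcal{K}}$, $\beta>0$ and $\epsilon>0$ be given. Suppose the ADMM iterates $\{\bm{x}_0^t,\{\bm{x}_k^t,(\bm{x}_k^{\text{base}})^t\}_{k\in\mathcal{K}},\{\bm{z}_k^t\}_{k\in\mathcal{K}}\}_{t\in\mathbb{N}}$ satisfy: (descent in base case update) $\bm{x}_0^{t+1}$ is a stationary point of the $\bm{x}_0$-subproblem and $f_0(\bm{x}_0^{t+1})+\sum_{k\in\mathcal{K}}\big(\langle\bm{y}_k^t,\bm{x}_0^{t+1}\rangle+\tfrac{\rho}{2}\|\bm{x}_0^{t+1}-(\bm{x}_k^{\text{base}})^t+\bm{z}_k^t\|^2\big)\le f_0(\bm{x}_0^{t})+\sum_{k\in\mathcal{K}}\big(\langle\bm{y}_k^t,\bm{x}_0^{t}\rangle+\tfrac{\rho}{2}\|\bm{x}_0^{t}-(\bm{x}_k^{\text{base}})^t+\bm{z}_k^t\|^2\big)$; (descent in contingency update) there is $\gamma>0$ such that for all $k\in\mathcal{K}$, $(\bm{x}_k^{t+1},(\bm{x}_k^{\text{base}})^{t+1})$ is a stationary point of the $k$-th contingency subproblem and $f_k(\bm{x}_k^{t+1})-\langle\bm{y}_k^t,(\bm{x}_k^{\text{base}})^{t+1}\rangle+\tfrac{\rho}{2}\|\bm{x}_0^{t+1}-(\bm{x}_k^{\text{base}})^{t+1}+\bm{z}_k^t\|^2\le f_k(\bm{x}_k^{t})-\langle\bm{y}_k^t,(\bm{x}_k^{\text{base}})^{t}\rangle+\tfrac{\rho}{2}\|\bm{x}_0^{t+1}-(\bm{x}_k^{\text{base}})^{t}+\bm{z}_k^t\|^2-\gamma\beta\|(\bm{x}_k^{\text{base}})^{t+1}-(\bm{x}_k^{\text{base}})^{t}\|^2$.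 Then ADMM finds an $\epsilon$-stationary solution of the augmented Lagrangian relaxation problem (in the sense defined in the context) in at most $$T\le\left\lceil\frac{2\rho^2|\mathcal{K}|\,(\overline{L}(\bm{\lambda},\beta)-\underline{L}(\bm{\lambda},\beta))}{\min\{\gamma\beta,(\beta+\rho)/2-\beta^2/\rho\}}\cdot\frac{1}{\epsilon^2}\right\rceil$$ iterations, where $\overline{L}(\bm{\lambda},\beta):=f_0(\bm{x}_0^0)+\sum_{k\in\mathcal{K}}\big(f_k(\bm{x}_k^0)+\langle\bm{\lambda}_k,\bm{z}_k^0\rangle+\tfrac{\beta}{2}\|\bm{z}_k^0\|^2\big)+\sum_{k\in\mathcal{K}}\big(\langle\bm{y}_k^0,\bm{x}_0^0-(\bm{x}_k^{\text{base}})^0+\bm{z}_k^0\rangle+\tfrac{\rho}{2}\|\bm{x}_0^0-(\bm{x}_k^{\text{base}})^0+\bm{z}_k^0\|^2\big)$ and $\underline{L}(\bm{\lambda},\beta):=\min\{\sum_{g\in\mathcal{G}}c_g(p_{g0}):p_{g0}\in[\underline{p}_g,\overline{p}_g]\ \forall g\in\mathcal{G}\}-\|\bm{\lambda}\|^2/\beta$.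
   Context: Setting (smoothed two-stage SC-ACOPF): $\mathcal{G}$ is the set of generators, $\mathcal{K}$ the set of contingencies; $\bm{x}_0$ collects base case variables, $\bm{x}_k$ the variables of contingency $k$, and $\bm{x}_k^{\text{base}}$ is contingency $k$'s copy of $\bm{x}_0$. $X_0$ is the (closed) base case feasible set and $X_k$ the (closed, approximated) feasible set of $(\bm{x}_k,\bm{x}_k^{\text{base}})$. The costs are $f_0(\bm{x}_0)=\sum_{g\in\mathcal{G}}c_g(p_{g0})+\delta c_0^\sigma$ and $f_k(\bm{x}_k)=(1-\delta)\frac{1}{|\mathcal{K}|}c_k^\sigma$, where each $c_g$ is a convex piecewise linear increasing generation cost of base case active power $p_{g0}\in[\underline{p}_g,\overline{p}_g]$ and $c_k^\sigma\ge 0$ is a penalty cost (sum of convex piecewise linear increasing functions of nonnegative slack variables). Augmented Lagrangian relaxation (ALR) problem: minimize $f_0(\bm{x}_0)+\sum_{k\in\mathcal{K}}\big(f_k(\bm{x}_k)+\langle\bm{\lambda}_k,\bm{z}_k\rangle+\frac{\beta}{2}\|\bm{z}_k\|^2\big)$ subject to $\bm{x}_0-\bm{x}_k^{\text{base}}+\bm{z}_k=0$, $\bm{x}_0\in X_0$, $(\bm{x}_k,\bm{x}_k^{\text{base}})\in X_k$ for all $k\in\mathcal{K}$. ADMM is run with penalty $\rho=\tau\beta$, $\tau>1$, $\beta>1$, starting from $\bm{x}_0^0\in X_0$, $(\bm{x}_k^0,(\bm{x}_k^{\text{base}})^0)\in X_k$ and $(\bm{z}_k^0,\bm{y}_k^0)$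 with $\bm{\lambda}_k+\beta\bm{z}_k^0+\bm{y}_k^0=0$, and updates $\bm{x}_0^{t+1}=\operatorname{argmin}_{\bm{x}_0\in X_0} f_0(\bm{x}_0)+\sum_{k}\big(\langle\bm{y}_k^t,\bm{x}_0\rangle+\frac{\rho}{2}\|\bm{x}_0-(\bm{x}_k^{\text{base}})^t+\bm{z}_k^t\|^2\big)$; $(\bm{x}_k^{t+1},(\bm{x}_k^{\text{base}})^{t+1})=\operatorname{argmin}_{(\bm{x}_k,\bm{x}_k^{\text{base}})\in X_k} f_k(\bm{x}_k)-\langle\bm{y}_k^t,\bm{x}_k^{\text{base}}\rangle+\frac{\rho}{2}\|\bm{x}_0^{t+1}-\bm{x}_k^{\text{base}}+\bm{z}_k^t\|^2$; $\bm{z}_k^{t+1}=\frac{1}{\beta+\rho}\big(\rho((\bm{x}_k^{\text{base}})^{t+1}-\bm{x}_0^{t+1})-\bm{\lambda}_k-\bm{y}_k^t\big)$; $\bm{y}_k^{t+1}=\bm{y}_k^t+\rho(\bm{x}_0^{t+1}-(\bm{x}_k^{\text{base}})^{t+1}+\bm{z}_k^{t+1})$. $\epsilon$-stationarity for the ALR problem: $(\bm{x}_0,\{\bm{x}_k,\bm{x}_k^{\text{base}}\},\{\bm{z}_k\})$ is $\epsilon$-stationary if there exist $\{\bm{y}_k\}$, $\bm{d}_0\in\partial f_0(\bm{x}_0)+\sum_k\bm{y}_k+\mathcal{N}_{X_0}(\bm{x}_0)$, and $\bm{d}_k\in[\tilde{\nabla}f_k(\bm{x}_k);-\bm{y}_k]+\mathcal{N}_{X_k}(\bm{x}_k,\bm{x}_k^{\text{base}})$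 with $\tilde{\nabla}f_k(\bm{x}_k)\in\partial f_k(\bm{x}_k)$, such that $0=\bm{\lambda}_k+\beta\bm{z}_k+\bm{y}_k$ for all $k$, and with $\bm{s}_k:=\bm{x}_0-\bm{x}_k^{\text{base}}+\bm{z}_k$ we have $\max\{\|\bm{d}_0\|,\|\bm{d}_k\|,\|\bm{s}_k\|:k\in\mathcal{K}\}\le\epsilon$. Here $\partial$ is the general (limiting) subdifferential and $\mathcal{N}$ the general normal cone of variational analysis. *)

theory Defs
  imports "HOL-Analysis.Analysis"
begin

definition msum :: "'a::ab_group_add set \<Rightarrow> 'a set \<Rightarrow> 'a set" where
  "msum A B = {a + b | a b. a \<in> A \<and> b \<in> B}"

definition frechet_subdiff :: "('a::real_inner \<Rightarrow> real) \<Rightarrow> 'a \<Rightarrow> 'a set" where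
  "frechet_subdiff f x = {v. \<forall>e>0. \<exists>d>0. \<forall>y. norm (y - x) < d \<longrightarrow>
       f y \<ge> f x + inner v (y - x) - e * norm (y - x)}"

definition lsubdiff :: "('a::real_inner \<Rightarrow> real) \<Rightarrow> 'a \<Rightarrow> 'a set" where
  "lsubdiff f x = {v. \<exists>xs vs. xs \<longlonglongrightarrow> x \<and> (\<lambda>n. f (xs n)) \<longlonglongrightarrow> f x \<and>
       vs \<longlonglongrightarrow> v \<and> (\<forall>n. vs n \<in> frechet_subdiff f (xs n))}"

definition frechet_normal :: "'a::real_inner set \<Rightarrow> 'a \<Rightarrow> 'a set" where
  "frechet_normal C x = {v. x \<in> C \<and> (\<forall>e>0. \<exists>d>0. \<forall>y\<in>C. norm (y - x) < d \<longrightarrow>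
       inner v (y - x) \<le> e * norm (y - x))}"

definition lnormal :: "'a::real_inner set \<Rightarrow> 'a \<Rightarrow> 'a set" where
  "lnormal C x = {v. x \<in> C \<and> (\<exists>xs vs. (\<forall>n. xs n \<in> C) \<and> xs \<longlonglongrightarrow> x \<and>
       vs \<longlonglongrightarrow> v \<and> (\<forall>n. vs n \<in> frechet_normal C (xs n)))}"

definition stationary_on :: "('a::real_inner \<Rightarrow> real) \<Rightarrow> 'a set \<Rightarrow> 'a \<Rightarrow> bool" where
  "stationary_on phi X x \<longleftrightarrow> 0 \<in> msum (lsubdiff phi x) (lnormal X x)"

definition cvx_pwl_incr :: "(real \<Rightarrow> real) \<Rightarrow> bool" where
  "cvx_pwl_incr c \<longleftrightarrow> mono c \<and>
     (\<exists>A. finite A \<and> A \<noteq> {} \<and> (\<forall>x. c x = Max ((\<lambda>(a, b). a * x + b) ` A)))"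

definition eps_stationary ::
  "('a::euclidean_space \<Rightarrow> real) \<Rightarrow> ('k \<Rightarrow> 'b::euclidean_space \<Rightarrow> real) \<Rightarrow> 'a set
   \<Rightarrow> ('k \<Rightarrow> ('b \<times> 'a) set) \<Rightarrow> 'k set \<Rightarrow> ('k \<Rightarrow> 'a) \<Rightarrow> real \<Rightarrow> real
   \<Rightarrow> 'a \<Rightarrow> ('k \<Rightarrow> 'b) \<Rightarrow> ('k \<Rightarrow> 'a) \<Rightarrow> ('k \<Rightarrow> 'a) \<Rightarrow> bool" where
  "eps_stationary f0 f X0 X K lam beta eps x0 xk xb z \<longleftrightarrow>
     (\<exists>y :: 'k \<Rightarrow> 'a.
        (\<forall>k\<in>K. lam k + beta *\<^sub>R z k + y k = 0) \<and>
        (\<exists>d0 \<in> msum (msum (lsubdiff f0 x0) {\<Sum>k\<in>K. y k}) (lnormal X0 x0). norm d0 \<le> eps) \<and>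
        (\<forall>k\<in>K. \<exists>g \<in> lsubdiff (f k) (xk k).
            \<exists>dk \<in> msum {(g, - y k)} (lnormal (X k) (xk k, xb k)). norm dk \<le> eps) \<and>
        (\<forall>k\<in>K. norm (x0 - xb k + z k) \<le> eps))"

end

theory Submission
  imports Defs
begin

(* Along the ADMM iterates the augmented Lagrangian L of the relaxed problem is a Lyapunov
   function. The base case update does not increase L, the contingency updates decrease it by
   gamma beta |x_k^base' - x_k^base|^2, the z-update minimizes a (beta + rho)-strongly convex
   quadratic exactly and so gains (beta + rho)/2 |z_k' - z_k|^2, while the multiplier update,
   which maintains lam_k + beta z_k + y_k = 0, costs only beta^2/rho |z_k' - z_k|^2. Hence L drops
   by at least m S_t per iteration, with S_t the sum of these squared steps and
   m = min (gamma beta) ((beta + rho)/2 - beta^2/rho), and L stays above the optimal generation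
   cost minus |lam|^2/beta. Among the first N iterations some S_t is therefore at most
   (Lbar - Lund)/(m N). Removing the smooth quadratic terms from the stationarity conditions of
   the subproblems shows that every residual of the next iterate is bounded by rho times the
   step, so that iterate is eps-stationary. *)

section \<open>Subdifferential calculus\<close>

lemma msumI: "a \<in> A \<Longrightarrow> b \<in> B \<Longrightarrow> a + b \<in> msum A B"
  unfolding msum_def by blast

lemma zero_in_msumE:
  assumes "0 \<in> msum A B"
  obtains a b where "a \<in> A" "b \<in> B" "a + b = 0"
  using assms unfolding msum_def by force

lemma stationary_on_imp_mem: "stationary_on phi X x \<Longrightarrow> x \<in> X"
  unfolding stationary_on_def msum_def lnormal_def by auto

lemma frechet_subdiff_add_smooth:
  fixes F q :: "'a::real_inner \<Rightarrow> real"
  assumes v: "v \<in> frechet_subdiff (\<lambda>u. F u + q u) x"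
    and C: "0 \<le> C" and q_upper: "\<And>w. q w - q x - inner a (w - x) \<le> C * (norm (w - x))\<^sup>2"
  shows "v - a \<in> frechet_subdiff F x"
  unfolding frechet_subdiff_def
proof (intro CollectI allI impI)
  fix e :: real
  assume "e > 0"
  then have "e/2 > 0" by simp
  then obtain d where "d > 0" and d: "\<And>w. norm (w - x) < d \<Longrightarrow>
      F x + q x + inner v (w - x) - e/2 * norm (w - x) \<le> F w + q w"
    using v unfolding frechet_subdiff_def by blast
  define d' where "d' = min d (e / (2 * (C + 1)))"
  have "d' > 0" using \<open>d > 0\<close> \<open>e > 0\<close> C by (simp add: d'_def)
  moreover have "F x + inner (v - a) (w - x) - e * norm (w - x) \<le> F w" if w: "norm (w - x) < d'" for w
  proof -
    have "C * norm (w - x) \<le> e/2"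
    proof -
      have "C * norm (w - x) \<le> C * (e / (2 * (C + 1)))"
        using w C by (intro mult_left_mono) (auto simp: d'_def)
      also have "\<dots> \<le> e/2" using C \<open>e > 0\<close> by (simp add: field_simps)
      finally show ?thesis .
    qed
    then have "C * (norm (w - x))\<^sup>2 \<le> e/2 * norm (w - x)"
      unfolding power2_eq_square mult.assoc[symmetric] by (rule mult_right_mono) simp
    moreover have "norm (w - x) < d" using w by (simp add: d'_def)
    ultimately show ?thesis
      using d[of w] q_upper[of w] unfolding inner_diff_left by linarith
  qed
  ultimately show "\<exists>d>0. \<forall>w. norm (w - x) < d \<longrightarrow> F x + inner (v - a) (w - x) - e * norm (w - x) \<le> F w"
    by blast
qed

lemma lsubdiff_add_smooth:
  fixes F q :: "'a::real_inner \<Rightarrow> real" and a :: "'a \<Rightarrow> 'a"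
  assumes v: "v \<in> lsubdiff (\<lambda>u. F u + q u) x"
    and C: "0 \<le> C" and q_upper: "\<And>u w. q w - q u - inner (a u) (w - u) \<le> C * (norm (w - u))\<^sup>2"
    and "isCont q x" and "isCont a x"
  shows "v - a x \<in> lsubdiff F x"
proof -
  obtain xs vs where xs: "xs \<longlonglongrightarrow> x" and Fq: "(\<lambda>n. F (xs n) + q (xs n)) \<longlonglongrightarrow> F x + q x"
    and vs: "vs \<longlonglongrightarrow> v" and sub: "\<And>n. vs n \<in> frechet_subdiff (\<lambda>u. F u + q u) (xs n)"
    using v unfolding lsubdiff_def by blast
  have q: "(\<lambda>n. q (xs n)) \<longlonglongrightarrow> q x" and a: "(\<lambda>n. a (xs n)) \<longlonglongrightarrow> a x"
    using xs \<open>isCont q x\<close> \<open>isCont a x\<close> by (auto intro: isCont_tendsto_compose)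
  have "(\<lambda>n. (F (xs n) + q (xs n)) - q (xs n)) \<longlonglongrightarrow> (F x + q x) - q x"
    by (intro tendsto_diff Fq q)
  moreover have "(\<lambda>n. vs n - a (xs n)) \<longlonglongrightarrow> v - a x"
    by (intro tendsto_diff vs a)
  moreover have "vs n - a (xs n) \<in> frechet_subdiff F (xs n)" for n
    by (rule frechet_subdiff_add_smooth[OF sub C q_upper])
  ultimately show ?thesis
    using xs unfolding lsubdiff_def mem_Collect_eq
    by (intro exI[of _ xs] exI[of _ "\<lambda>n. vs n - a (xs n)"]) simp
qed

lemma frechet_subdiff_comp_fst:
  fixes F :: "'a::real_inner \<Rightarrow> real" and u :: "'b::real_inner"
  assumes gw: "(g, w) \<in> frechet_subdiff (\<lambda>p. F (fst p)) (v, u)"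
  shows "w = 0 \<and> g \<in> frechet_subdiff F v"
proof
  have D: "\<exists>d>0. \<forall>p. norm (p - (v, u)) < d \<longrightarrow>
      F v + inner (g, w) (p - (v, u)) - e * norm (p - (v, u)) \<le> F (fst p)" if "e > 0" for e
    using gw that unfolding frechet_subdiff_def by auto
  show "w = 0"
  proof (rule ccontr)
    assume "w \<noteq> 0"
    then have nw: "norm w > 0" by simp
    \<comment> \<open>moving along \<open>(0, w)\<close> leaves \<open>F \<circ> fst\<close> unchanged but gains \<open>norm w\<close> per unit length\<close>
    obtain d where "d > 0" and d: "\<And>p. norm (p - (v, u)) < d \<Longrightarrow>
        F v + inner (g, w) (p - (v, u)) - norm w / 2 * norm (p - (v, u)) \<le> F (fst p)"
      using D[of "norm w / 2"] nw by auto
    define t where "t = d / (2 * norm w)"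
    have "t > 0" using \<open>d > 0\<close> nw by (simp add: t_def)
    have "norm ((v, u + t *\<^sub>R w) - (v, u)) = t * norm w"
      using \<open>t > 0\<close> by (simp add: norm_Pair)
    also have "\<dots> < d" using \<open>d > 0\<close> nw by (simp add: t_def)
    finally have "F v + t * (norm w)\<^sup>2 - norm w / 2 * (t * norm w) \<le> F v"
      using d[of "(v, u + t *\<^sub>R w)"] \<open>t > 0\<close> by (simp add: norm_Pair power2_norm_eq_inner)
    then have "t * (norm w)\<^sup>2 \<le> 0" by (simp add: power2_eq_square algebra_simps)
    with \<open>t > 0\<close> nw show False by (simp add: mult_le_0_iff)
  qed
  show "g \<in> frechet_subdiff F v"
    unfolding frechet_subdiff_def
  proof (intro CollectI allI impI)
    fix e :: real
    assume "e > 0"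
    then obtain d where "d > 0" and d: "\<And>p. norm (p - (v, u)) < d \<Longrightarrow>
        F v + inner (g, w) (p - (v, u)) - e * norm (p - (v, u)) \<le> F (fst p)"
      using D by blast
    have "F v + inner g (x - v) - e * norm (x - v) \<le> F x" if "norm (x - v) < d" for x
      using d[of "(x, u)"] that by (simp add: norm_Pair)
    with \<open>d > 0\<close> show "\<exists>d>0. \<forall>x. norm (x - v) < d \<longrightarrow> F v + inner g (x - v) - e * norm (x - v) \<le> F x"
      by blast
  qed
qed

lemma lsubdiff_comp_fst:
  fixes F :: "'a::real_inner \<Rightarrow> real" and u :: "'b::real_inner"
  assumes gw: "(g, w) \<in> lsubdiff (\<lambda>p. F (fst p)) (v, u)"
  shows "w = 0 \<and> g \<in> lsubdiff F v"
proof -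
  obtain ps vs where ps: "ps \<longlonglongrightarrow> (v, u)" and F: "(\<lambda>n. F (fst (ps n))) \<longlonglongrightarrow> F v"
    and vs: "vs \<longlonglongrightarrow> (g, w)" and sub: "\<And>n. vs n \<in> frechet_subdiff (\<lambda>p. F (fst p)) (ps n)"
    using gw unfolding lsubdiff_def by auto
  have sub': "snd (vs n) = 0 \<and> fst (vs n) \<in> frechet_subdiff F (fst (ps n))" for n
    using frechet_subdiff_comp_fst[of "fst (vs n)" "snd (vs n)" F "fst (ps n)" "snd (ps n)"] sub[of n]
    by simp
  have "(\<lambda>n. snd (vs n)) \<longlonglongrightarrow> w" using tendsto_snd[OF vs] by simp
  then have "w = 0" using sub' by (simp add: LIMSEQ_const_iff)
  moreover have "g \<in> lsubdiff F v"
    unfolding lsubdiff_def mem_Collect_eq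
    by (rule exI[of _ "\<lambda>n. fst (ps n)"], rule exI[of _ "\<lambda>n. fst (vs n)"])
      (use tendsto_fst[OF ps] tendsto_fst[OF vs] F sub' in simp)
  ultimately show ?thesis ..
qed

lemma norm_sq_affine_remainder:
  fixes b c u w :: "'a::real_inner"
  shows "(inner b w + rho/2 * (norm (w + c))\<^sup>2) - (inner b u + rho/2 * (norm (u + c))\<^sup>2)
      - inner (b + rho *\<^sub>R (u + c)) (w - u) = rho/2 * (norm (w - u))\<^sup>2"
  by (simp add: power2_norm_eq_inner inner_simps algebra_simps inner_commute)

lemma norm_sq_affine_snd_remainder_le:
  fixes b c :: "'a::real_inner" and v w :: "'b::real_inner \<times> 'a"
  assumes "0 \<le> rho"
  shows "(inner b (snd w) + rho/2 * (norm (snd w + c))\<^sup>2) - (inner b (snd v) + rho/2 * (norm (snd v + c))\<^sup>2)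
      - inner (0, b + rho *\<^sub>R (snd v + c)) (w - v) \<le> rho/2 * (norm (w - v))\<^sup>2"
proof -
  have "norm (snd (w - v)) \<le> norm (w - v)"
    using norm_snd_le[of "snd (w - v)" "fst (w - v)"] by (simp only: prod.collapse)
  then have "rho/2 * (norm (snd w - snd v))\<^sup>2 \<le> rho/2 * (norm (w - v))\<^sup>2"
    using assms by (simp add: power_mono mult_left_mono)
  then show ?thesis
    using norm_sq_affine_remainder[of b "snd w" rho c "snd v"] by (simp add: inner_prod_def)
qed

lemma quadratic_at_stationary_point:
  fixes l u c w z :: "'a::real_inner"
  assumes "l + beta *\<^sub>R z + u + rho *\<^sub>R (c + z) = 0"
  shows "inner l w + beta/2 * (norm w)\<^sup>2 + (inner u (c + w) + rho/2 * (norm (c + w))\<^sup>2)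
       = inner l z + beta/2 * (norm z)\<^sup>2 + (inner u (c + z) + rho/2 * (norm (c + z))\<^sup>2)
         + (beta + rho)/2 * (norm (w - z))\<^sup>2"
proof -
  have l: "l = - (beta *\<^sub>R z + u + rho *\<^sub>R (c + z))"
    using assms unfolding eq_neg_iff_add_eq_0 by (simp only: add.assoc)
  show ?thesis
    unfolding l by (simp add: power2_norm_eq_inner inner_simps algebra_simps inner_commute field_simps)
qed

lemma lagrangian_term_lower_bound:
  fixes l w s :: "'a::real_inner"
  assumes "0 < beta" and "beta \<le> rho"
  shows "- (norm l)\<^sup>2 / (2 * beta)
      \<le> inner l w + beta/2 * (norm w)\<^sup>2 + (inner (- l - beta *\<^sub>R w) s + rho/2 * (norm s)\<^sup>2)"
proof -
  have "inner l w + beta/2 * (norm w)\<^sup>2 + (inner (- l - beta *\<^sub>R w) s + rho/2 * (norm s)\<^sup>2)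
      = (norm (beta *\<^sub>R (w - s) + l))\<^sup>2 / (2 * beta) + (rho - beta)/2 * (norm s)\<^sup>2 - (norm l)\<^sup>2 / (2 * beta)"
    using \<open>0 < beta\<close> by (simp add: power2_norm_eq_inner inner_simps algebra_simps inner_commute field_simps)
  moreover have "0 \<le> (norm (beta *\<^sub>R (w - s) + l))\<^sup>2 / (2 * beta)" "0 \<le> (rho - beta)/2 * (norm s)\<^sup>2"
    using assms by simp_all
  ultimately show ?thesis by linarith
qed

lemma square_sum_add_le:
  fixes a b :: "'k \<Rightarrow> real"
  shows "(\<Sum>k\<in>K. a k + b k)\<^sup>2 \<le> 2 * real (card K) * (\<Sum>k\<in>K. (a k)\<^sup>2 + (b k)\<^sup>2)"
proof -
  have "(\<Sum>k\<in>K. a k + b k)\<^sup>2 \<le> (\<Sum>k\<in>K. (a k + b k)\<^sup>2) * card K"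
    by (rule sum_squared_le_sum_of_squares)
  also have "\<dots> \<le> (\<Sum>k\<in>K. 2 * ((a k)\<^sup>2 + (b k)\<^sup>2)) * card K"
  proof (intro mult_right_mono sum_mono)
    fix k
    have "0 \<le> (a k - b k)\<^sup>2" by simp
    then show "(a k + b k)\<^sup>2 \<le> 2 * ((a k)\<^sup>2 + (b k)\<^sup>2)" by (simp add: power2_eq_square algebra_simps)
  qed simp
  also have "\<dots> = 2 * real (card K) * (\<Sum>k\<in>K. (a k)\<^sup>2 + (b k)\<^sup>2)"
    by (simp add: sum_distrib_left sum_distrib_right algebra_simps)
  finally show ?thesis .
qed

section \<open>Descent of the augmented Lagrangian\<close>

locale alr_admm =
  fixes f0 :: "'a::euclidean_space \<Rightarrow> real" and f :: "'k \<Rightarrow> 'b::euclidean_space \<Rightarrow> real"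
    and X0 :: "'a set" and X :: "'k \<Rightarrow> ('b \<times> 'a) set" and K :: "'k set"
    and lam :: "'k \<Rightarrow> 'a" and beta rho gamma :: real
    and x0 :: "nat \<Rightarrow> 'a" and xk :: "nat \<Rightarrow> 'k \<Rightarrow> 'b" and xb z y :: "nat \<Rightarrow> 'k \<Rightarrow> 'a"
  assumes finite_K: "finite K"
    and beta_gt_1: "1 < beta" and beta_less_rho: "beta < rho" and gamma_pos: "0 < gamma"
    and x0_init: "x0 0 \<in> X0" and xk_init: "\<And>k. k \<in> K \<Longrightarrow> (xk 0 k, xb 0 k) \<in> X k"
    and y_init: "\<And>k. k \<in> K \<Longrightarrow> lam k + beta *\<^sub>R z 0 k + y 0 k = 0"
    and x0_stationary: "\<And>t. stationary_on
        (\<lambda>v. f0 v + (\<Sum>k\<in>K. inner (y t k) v + rho / 2 * (norm (v - xb t k + z t k))\<^sup>2))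
        X0 (x0 (Suc t))"
    and x0_descent: "\<And>t.
        f0 (x0 (Suc t)) + (\<Sum>k\<in>K. inner (y t k) (x0 (Suc t)) + rho / 2 * (norm (x0 (Suc t) - xb t k + z t k))\<^sup>2)
        \<le> f0 (x0 t) + (\<Sum>k\<in>K. inner (y t k) (x0 t) + rho / 2 * (norm (x0 t - xb t k + z t k))\<^sup>2)"
    and xk_stationary: "\<And>t k. k \<in> K \<Longrightarrow> stationary_on
        (\<lambda>(v, vb). f k v - inner (y t k) vb + rho / 2 * (norm (x0 (Suc t) - vb + z t k))\<^sup>2)
        (X k) (xk (Suc t) k, xb (Suc t) k)"
    and xk_descent: "\<And>t k. k \<in> K \<Longrightarrow>
        f k (xk (Suc t) k) - inner (y t k) (xb (Suc t) k) + rho / 2 * (norm (x0 (Suc t) - xb (Suc t) k + z t k))\<^sup>2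
        \<le> f k (xk t k) - inner (y t k) (xb t k) + rho / 2 * (norm (x0 (Suc t) - xb t k + z t k))\<^sup>2
           - gamma * beta * (norm (xb (Suc t) k - xb t k))\<^sup>2"
    and z_update: "\<And>t k. k \<in> K \<Longrightarrow> z (Suc t) k =
        (1 / (beta + rho)) *\<^sub>R (rho *\<^sub>R (xb (Suc t) k - x0 (Suc t)) - lam k - y t k)"
    and y_update: "\<And>t k. k \<in> K \<Longrightarrow> y (Suc t) k = y t k + rho *\<^sub>R (x0 (Suc t) - xb (Suc t) k + z (Suc t) k)"
begin

text \<open>\<open>aug_lagrangian v0 v vb w u\<close> is the paper's \<open>L(x_0, {x_k, x_k^base}, z, y)\<close>,
  and \<open>lagr_term k\<close> is its summand for contingency \<open>k\<close>.\<close>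

definition lagr_term :: "'k \<Rightarrow> 'a \<Rightarrow> 'b \<Rightarrow> 'a \<Rightarrow> 'a \<Rightarrow> 'a \<Rightarrow> real" where
  "lagr_term k v0 v vb w u = f k v + inner (lam k) w + beta / 2 * (norm w)\<^sup>2
      + (inner u (v0 - vb + w) + rho / 2 * (norm (v0 - vb + w))\<^sup>2)"

definition aug_lagrangian :: "'a \<Rightarrow> ('k \<Rightarrow> 'b) \<Rightarrow> ('k \<Rightarrow> 'a) \<Rightarrow> ('k \<Rightarrow> 'a) \<Rightarrow> ('k \<Rightarrow> 'a) \<Rightarrow> real" where
  "aug_lagrangian v0 v vb w u = f0 v0 + (\<Sum>k\<in>K. lagr_term k v0 (v k) (vb k) (w k) (u k))"

abbreviation auglag :: "nat \<Rightarrow> real" where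
  "auglag t \<equiv> aug_lagrangian (x0 t) (xk t) (xb t) (z t) (y t)"

definition step_sq :: "nat \<Rightarrow> real" where
  "step_sq t = (\<Sum>k\<in>K. (norm (xb (Suc t) k - xb t k))\<^sup>2 + (norm (z (Suc t) k - z t k))\<^sup>2)"

definition descent_const :: real where
  "descent_const = min (gamma * beta) ((beta + rho) / 2 - beta\<^sup>2 / rho)"

lemma beta_pos: "0 < beta" and rho_pos: "0 < rho"
  using beta_gt_1 beta_less_rho by simp_all

lemma descent_const_pos: "0 < descent_const"
proof -
  have "beta\<^sup>2 / rho < beta"
    using beta_pos beta_less_rho by (simp add: power2_eq_square divide_less_eq)
  then have "0 < (beta + rho) / 2 - beta\<^sup>2 / rho"
    using beta_less_rho by (simp add: field_simps)
  then show ?thesis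
    using gamma_pos beta_pos by (simp add: descent_const_def)
qed

lemma step_sq_nonneg: "0 \<le> step_sq t"
  unfolding step_sq_def by (intro sum_nonneg) simp

lemma x0_mem_X0: "x0 t \<in> X0"
  using x0_init stationary_on_imp_mem[OF x0_stationary] by (cases t) auto

lemma xk_mem_X: "k \<in> K \<Longrightarrow> (xk t k, xb t k) \<in> X k"
  using xk_init stationary_on_imp_mem[OF xk_stationary] by (cases t) auto

lemma z_update_stationary:
  assumes "k \<in> K"
  shows "lam k + beta *\<^sub>R z (Suc t) k + y t k + rho *\<^sub>R (x0 (Suc t) - xb (Suc t) k + z (Suc t) k) = 0"
proof -
  have "(beta + rho) *\<^sub>R z (Suc t) k = rho *\<^sub>R (xb (Suc t) k - x0 (Suc t)) - lam k - y t k"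
    using z_update[OF assms] beta_pos rho_pos by simp
  then show ?thesis
    by (simp add: algebra_simps)
qed

lemma multiplier_invariant:
  assumes "k \<in> K"
  shows "lam k + beta *\<^sub>R z t k + y t k = 0"
proof (cases t)
  case 0
  then show ?thesis using y_init[OF assms] by simp
next
  case (Suc s)
  have "lam k + beta *\<^sub>R z (Suc s) k + y (Suc s) k
      = lam k + beta *\<^sub>R z (Suc s) k + y s k + rho *\<^sub>R (x0 (Suc s) - xb (Suc s) k + z (Suc s) k)"
    using y_update[OF assms, of s] by (simp add: algebra_simps)
  also have "\<dots> = 0"
    by (rule z_update_stationary[OF assms])
  finally show ?thesis using Suc by simp
qed

lemma multiplier_eq: "k \<in> K \<Longrightarrow> y t k = - lam k - beta *\<^sub>R z t k"
  using multiplier_invariant[of k t] by (simp add: eq_neg_iff_add_eq_0 algebra_simps)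

lemma residual_eq:
  assumes "k \<in> K"
  shows "rho *\<^sub>R (x0 (Suc t) - xb (Suc t) k + z (Suc t) k) = - beta *\<^sub>R (z (Suc t) k - z t k)"
  using y_update[OF assms, of t] multiplier_eq[OF assms, of t] multiplier_eq[OF assms, of "Suc t"]
  by (simp add: algebra_simps)

lemma lagr_term_xk_step:
  assumes "k \<in> K"
  shows "lagr_term k (x0 (Suc t)) (xk (Suc t) k) (xb (Suc t) k) (z t k) (y t k)
    \<le> lagr_term k (x0 (Suc t)) (xk t k) (xb t k) (z t k) (y t k) - gamma * beta * (norm (xb (Suc t) k - xb t k))\<^sup>2"
  using xk_descent[OF assms, of t] by (simp add: lagr_term_def inner_simps)

text \<open>The z-update minimizes a \<open>(beta + rho)\<close>-strongly convex quadratic exactly, hence the equality.\<close>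

lemma lagr_term_z_step:
  assumes "k \<in> K"
  shows "lagr_term k (x0 (Suc t)) (xk (Suc t) k) (xb (Suc t) k) (z t k) (y t k)
    = lagr_term k (x0 (Suc t)) (xk (Suc t) k) (xb (Suc t) k) (z (Suc t) k) (y t k)
      + (beta + rho) / 2 * (norm (z (Suc t) k - z t k))\<^sup>2"
  using quadratic_at_stationary_point[OF z_update_stationary[OF assms, of t], of "z t k"]
  unfolding lagr_term_def norm_minus_commute[of "z t k"] by linarith

lemma lagr_term_y_step:
  assumes "k \<in> K"
  shows "lagr_term k (x0 (Suc t)) (xk (Suc t) k) (xb (Suc t) k) (z (Suc t) k) (y (Suc t) k)
    = lagr_term k (x0 (Suc t)) (xk (Suc t) k) (xb (Suc t) k) (z (Suc t) k) (y t k)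
      + beta\<^sup>2 / rho * (norm (z (Suc t) k - z t k))\<^sup>2"
proof -
  define s where "s = x0 (Suc t) - xb (Suc t) k + z (Suc t) k"
  have rho_s: "rho * norm s = beta * norm (z (Suc t) k - z t k)"
    using arg_cong[OF residual_eq[OF assms, of t], of norm] rho_pos beta_pos by (simp add: s_def)
  have "inner (rho *\<^sub>R s) s = (rho * norm s)\<^sup>2 / rho"
    using rho_pos by (simp add: power2_eq_square flip: power2_norm_eq_inner)
  also have "\<dots> = beta\<^sup>2 / rho * (norm (z (Suc t) k - z t k))\<^sup>2"
    unfolding rho_s by (simp add: power_mult_distrib)
  finally show ?thesis
    using y_update[OF assms, of t] unfolding lagr_term_def s_def by (simp add: inner_add_left)
qed

lemma lagr_term_descent:
  assumes "k \<in> K"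
  shows "lagr_term k (x0 (Suc t)) (xk (Suc t) k) (xb (Suc t) k) (z (Suc t) k) (y (Suc t) k)
    \<le> lagr_term k (x0 (Suc t)) (xk t k) (xb t k) (z t k) (y t k)
      - (gamma * beta * (norm (xb (Suc t) k - xb t k))\<^sup>2
         + ((beta + rho) / 2 - beta\<^sup>2 / rho) * (norm (z (Suc t) k - z t k))\<^sup>2)"
  using lagr_term_xk_step[OF assms, of t] lagr_term_z_step[OF assms, of t] lagr_term_y_step[OF assms, of t]
    left_diff_distrib[of "(beta + rho) / 2" "beta\<^sup>2 / rho" "(norm (z (Suc t) k - z t k))\<^sup>2"]
  by linarith

lemma aug_lagrangian_x0_step: "aug_lagrangian (x0 (Suc t)) (xk t) (xb t) (z t) (y t) \<le> auglag t"
proof -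
  have split: "aug_lagrangian v0 v vb w u
      = (f0 v0 + (\<Sum>k\<in>K. inner (u k) v0 + rho / 2 * (norm (v0 - vb k + w k))\<^sup>2))
        + (\<Sum>k\<in>K. f k (v k) + inner (lam k) (w k) + beta / 2 * (norm (w k))\<^sup>2 + inner (u k) (w k - vb k))"
    for v0 v vb w u
    by (simp add: aug_lagrangian_def lagr_term_def sum.distrib[symmetric] inner_simps algebra_simps)
  show ?thesis
    unfolding split using x0_descent[of t] by simp
qed

lemma aug_lagrangian_descent: "auglag (Suc t) \<le> auglag t - descent_const * step_sq t"
proof -
  define D where "D k = gamma * beta * (norm (xb (Suc t) k - xb t k))\<^sup>2
      + ((beta + rho) / 2 - beta\<^sup>2 / rho) * (norm (z (Suc t) k - z t k))\<^sup>2" for k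
  have "auglag (Suc t) \<le> f0 (x0 (Suc t)) + (\<Sum>k\<in>K. lagr_term k (x0 (Suc t)) (xk t k) (xb t k) (z t k) (y t k) - D k)"
    unfolding aug_lagrangian_def D_def by (intro add_left_mono sum_mono lagr_term_descent)
  also have "\<dots> = aug_lagrangian (x0 (Suc t)) (xk t) (xb t) (z t) (y t) - (\<Sum>k\<in>K. D k)"
    by (simp add: aug_lagrangian_def sum_subtractf)
  finally have "auglag (Suc t) \<le> auglag t - (\<Sum>k\<in>K. D k)"
    using aug_lagrangian_x0_step[of t] by linarith
  moreover have "descent_const * step_sq t \<le> (\<Sum>k\<in>K. D k)"
    unfolding step_sq_def sum_distrib_left distrib_left D_def
    by (intro sum_mono add_mono mult_right_mono) (simp_all add: descent_const_def)
  ultimately show ?thesis by linarith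
qed

lemma step_sq_sum_le: "descent_const * (\<Sum>t<N. step_sq t) \<le> auglag 0 - auglag N"
proof (induction N)
  case (Suc N)
  then show ?case
    using aug_lagrangian_descent[of N] by (simp add: distrib_left)
qed simp

lemma aug_lagrangian_lower_bound:
  assumes f0_lower: "\<And>x. x \<in> X0 \<Longrightarrow> c0 \<le> f0 x"
    and f_nonneg: "\<And>k v vb. k \<in> K \<Longrightarrow> (v, vb) \<in> X k \<Longrightarrow> 0 \<le> f k v"
  shows "c0 - (\<Sum>k\<in>K. (norm (lam k))\<^sup>2) / beta \<le> auglag t"
proof -
  have "- (norm (lam k))\<^sup>2 / beta \<le> lagr_term k (x0 t) (xk t k) (xb t k) (z t k) (y t k)" if "k \<in> K" for k
  proof -
    have "- (norm (lam k))\<^sup>2 / beta \<le> - (norm (lam k))\<^sup>2 / (2 * beta)"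
      using beta_pos by (simp add: frac_le)
    also have "\<dots> \<le> lagr_term k (x0 t) (xk t k) (xb t k) (z t k) (y t k) - f k (xk t k)"
      using lagrangian_term_lower_bound[OF beta_pos less_imp_le[OF beta_less_rho],
          of "lam k" "z t k" "x0 t - xb t k + z t k"]
      by (simp add: lagr_term_def multiplier_eq[OF that] add.assoc)
    finally show ?thesis
      using f_nonneg[OF that xk_mem_X[OF that, of t]] by linarith
  qed
  then have "(\<Sum>k\<in>K. - (norm (lam k))\<^sup>2 / beta) \<le> (\<Sum>k\<in>K. lagr_term k (x0 t) (xk t k) (xb t k) (z t k) (y t k))"
    by (rule sum_mono)
  then show ?thesis
    using f0_lower[OF x0_mem_X0, of t] by (simp add: aug_lagrangian_def sum_negf sum_divide_distrib)
qed

section \<open>Stationarity after a small step\<close>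

text \<open>Removing the smooth part \<open>q\<close> of the base case objective from its stationarity condition
  shifts the subgradient by the gradient of \<open>q\<close>, which by the y-update differs from the sum of
  the new multipliers by exactly this sum.\<close>

lemma x0_residual_mem_subdiff:
  "(\<Sum>k\<in>K. rho *\<^sub>R (xb t k - xb (Suc t) k + (z (Suc t) k - z t k)))
    \<in> msum (msum (lsubdiff f0 (x0 (Suc t))) {\<Sum>k\<in>K. y (Suc t) k}) (lnormal X0 (x0 (Suc t)))"
proof -
  define q where "q v = (\<Sum>k\<in>K. inner (y t k) v + rho / 2 * (norm (v - xb t k + z t k))\<^sup>2)" for v
  define a where "a v = (\<Sum>k\<in>K. y t k + rho *\<^sub>R (v - xb t k + z t k))" for v
  obtain u n where u: "u \<in> lsubdiff (\<lambda>v. f0 v + q v) (x0 (Suc t))"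
    and n: "n \<in> lnormal X0 (x0 (Suc t))" and "u + n = 0"
    using x0_stationary[of t] unfolding stationary_on_def q_def by (rule zero_in_msumE)
  have "q w - q v - inner (a v) (w - v) = real (card K) * (rho / 2) * (norm (w - v))\<^sup>2" for v w
  proof -
    have "q w - q v - inner (a v) (w - v) = (\<Sum>k\<in>K. rho / 2 * (norm (w - v))\<^sup>2)"
      unfolding q_def a_def inner_sum_left sum_subtractf[symmetric]
      using norm_sq_affine_remainder[of "y t _" w rho "z t _ - xb t _" v]
      by (intro sum.cong) (simp_all add: algebra_simps)
    then show ?thesis by simp
  qed
  then have "u - a (x0 (Suc t)) \<in> lsubdiff f0 (x0 (Suc t))"
    using rho_pos
    by (intro lsubdiff_add_smooth[OF u, of "real (card K) * (rho / 2)"])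
      (simp_all add: q_def a_def continuous_intros)
  then have "(u - a (x0 (Suc t))) + (\<Sum>k\<in>K. y (Suc t) k) + n
      \<in> msum (msum (lsubdiff f0 (x0 (Suc t))) {\<Sum>k\<in>K. y (Suc t) k}) (lnormal X0 (x0 (Suc t)))"
    by (intro msumI n singletonI)
  moreover have "(u - a (x0 (Suc t))) + (\<Sum>k\<in>K. y (Suc t) k) + n
      = (\<Sum>k\<in>K. rho *\<^sub>R (xb t k - xb (Suc t) k + (z (Suc t) k - z t k)))"
  proof -
    have "(u - a (x0 (Suc t))) + (\<Sum>k\<in>K. y (Suc t) k) + n = (\<Sum>k\<in>K. y (Suc t) k) - a (x0 (Suc t))"
      using \<open>u + n = 0\<close> by (simp add: algebra_simps)
    also have "\<dots> = (\<Sum>k\<in>K. rho *\<^sub>R (xb t k - xb (Suc t) k + (z (Suc t) k - z t k)))"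
      unfolding a_def sum_subtractf[symmetric]
      by (intro sum.cong) (simp_all add: y_update algebra_simps)
    finally show ?thesis .
  qed
  ultimately show ?thesis by simp
qed

text \<open>The same argument for the contingency subproblem; its cost does not depend on \<open>x_k^base\<close>,
  so its subgradients vanish in that block.\<close>

lemma xk_residual_mem_subdiff:
  assumes "k \<in> K"
  shows "\<exists>g\<in>lsubdiff (f k) (xk (Suc t) k).
    (0, rho *\<^sub>R (z t k - z (Suc t) k)) \<in> msum {(g, - y (Suc t) k)} (lnormal (X k) (xk (Suc t) k, xb (Suc t) k))"
proof -
  define p where "p = (xk (Suc t) k, xb (Suc t) k)"
  define c where "c = - (x0 (Suc t) + z t k)"
  define q where "q v = inner (- y t k) (snd v) + rho / 2 * (norm (snd v + c))\<^sup>2" for v :: "'b \<times> 'a"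
  define a where "a v = (0 :: 'b, - y t k + rho *\<^sub>R (snd v + c))" for v :: "'b \<times> 'a"
  have "norm (x0 (Suc t) - vb + z t k) = norm (vb + c)" for vb
    using norm_minus_cancel[of "vb + c"] by (simp add: c_def algebra_simps)
  then have "(\<lambda>(v, vb). f k v - inner (y t k) vb + rho / 2 * (norm (x0 (Suc t) - vb + z t k))\<^sup>2)
      = (\<lambda>v. f k (fst v) + q v)"
    by (simp add: q_def case_prod_beta' fun_eq_iff)
  then have "stationary_on (\<lambda>v. f k (fst v) + q v) (X k) p"
    using xk_stationary[OF assms, of t] unfolding p_def by simp
  then obtain u n where u: "u \<in> lsubdiff (\<lambda>v. f k (fst v) + q v) p"
    and n: "n \<in> lnormal (X k) p" and "u + n = 0"
    unfolding stationary_on_def by (rule zero_in_msumE)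
  have "q w - q v - inner (a v) (w - v) \<le> rho / 2 * (norm (w - v))\<^sup>2" for v w
    unfolding q_def a_def using rho_pos by (intro norm_sq_affine_snd_remainder_le) simp
  then have "u - a p \<in> lsubdiff (\<lambda>v. f k (fst v)) p"
    using rho_pos
    by (intro lsubdiff_add_smooth[OF u, of "rho / 2"]) (simp_all add: q_def a_def continuous_intros)
  then have "snd (u - a p) = 0 \<and> fst (u - a p) \<in> lsubdiff (f k) (xk (Suc t) k)"
    using lsubdiff_comp_fst[of "fst (u - a p)" "snd (u - a p)" "f k" "xk (Suc t) k" "xb (Suc t) k"]
    unfolding p_def prod.collapse by blast
  then obtain g where ug: "u - a p = (g, 0)" and g: "g \<in> lsubdiff (f k) (xk (Suc t) k)"
    by (metis prod.collapse)
  have "n = - (a p + (g, 0))"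
    using \<open>u + n = 0\<close> ug by (metis minus_unique diff_add_cancel add.commute)
  then have "(0, rho *\<^sub>R (z t k - z (Suc t) k)) = (g, - y (Suc t) k) + n"
    by (simp add: a_def p_def c_def y_update[OF assms] algebra_simps
        scaleR_right_distrib scaleR_right_diff_distrib)
  then show ?thesis
    using g msumI[OF singletonI n] unfolding p_def by auto
qed

lemma z_step_sq_le:
  assumes "k \<in> K"
  shows "(norm (z (Suc t) k - z t k))\<^sup>2 \<le> 2 * real (card K) * step_sq t"
proof -
  have "1 \<le> real (card K)"
    using assms finite_K by (auto simp: Suc_le_eq card_gt_0_iff)
  have "(norm (z (Suc t) k - z t k))\<^sup>2
      \<le> (norm (xb (Suc t) k - xb t k))\<^sup>2 + (norm (z (Suc t) k - z t k))\<^sup>2"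
    by simp
  also have "\<dots> \<le> step_sq t"
    unfolding step_sq_def using assms finite_K by (intro member_le_sum) simp_all
  also have "\<dots> \<le> 2 * real (card K) * step_sq t"
    using mult_right_mono[of 1 "2 * real (card K)" "step_sq t"] \<open>1 \<le> real (card K)\<close> step_sq_nonneg[of t]
    by simp
  finally show ?thesis .
qed

lemma x0_residual_sq_le:
  "(norm (\<Sum>k\<in>K. rho *\<^sub>R (xb t k - xb (Suc t) k + (z (Suc t) k - z t k))))\<^sup>2
    \<le> rho\<^sup>2 * (2 * real (card K) * step_sq t)"
proof -
  define A where "A k = norm (xb (Suc t) k - xb t k)" for k
  define B where "B k = norm (z (Suc t) k - z t k)" for k
  have "norm (\<Sum>k\<in>K. rho *\<^sub>R (xb t k - xb (Suc t) k + (z (Suc t) k - z t k)))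
      \<le> (\<Sum>k\<in>K. norm (rho *\<^sub>R (xb t k - xb (Suc t) k + (z (Suc t) k - z t k))))"
    by (rule norm_sum)
  also have "\<dots> \<le> (\<Sum>k\<in>K. rho * (A k + B k))"
  proof (rule sum_mono)
    fix k
    have "norm (xb t k - xb (Suc t) k + (z (Suc t) k - z t k)) \<le> A k + B k"
      using norm_triangle_ineq[of "xb t k - xb (Suc t) k" "z (Suc t) k - z t k"]
      by (simp add: A_def B_def norm_minus_commute[of "xb t k"])
    then show "norm (rho *\<^sub>R (xb t k - xb (Suc t) k + (z (Suc t) k - z t k))) \<le> rho * (A k + B k)"
      using rho_pos by (simp add: mult_le_cancel_left_pos)
  qed
  finally have "(norm (\<Sum>k\<in>K. rho *\<^sub>R (xb t k - xb (Suc t) k + (z (Suc t) k - z t k))))\<^sup>2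
      \<le> (rho * (\<Sum>k\<in>K. A k + B k))\<^sup>2"
    by (simp add: sum_distrib_left power_mono)
  also have "\<dots> \<le> rho\<^sup>2 * (2 * real (card K) * step_sq t)"
    unfolding power_mult_distrib step_sq_def A_def B_def by (rule mult_left_mono[OF square_sum_add_le]) simp
  finally show ?thesis .
qed

lemma primal_residual_le:
  assumes "k \<in> K"
  shows "norm (x0 (Suc t) - xb (Suc t) k + z (Suc t) k) \<le> rho * norm (z (Suc t) k - z t k)"
proof -
  have "rho * norm (x0 (Suc t) - xb (Suc t) k + z (Suc t) k) = beta * norm (z (Suc t) k - z t k)"
    using arg_cong[OF residual_eq[OF assms, of t], of norm] rho_pos beta_pos by simp
  also have "\<dots> \<le> rho * (rho * norm (z (Suc t) k - z t k))"
  proof -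
    have "rho \<le> rho * rho"
      using beta_gt_1 beta_less_rho by simp
    then have "beta \<le> rho * rho"
      using beta_less_rho by linarith
    then show ?thesis
      unfolding mult.assoc[symmetric] by (rule mult_right_mono) simp
  qed
  finally show ?thesis
    using rho_pos by (rule mult_left_le_imp_le)
qed

lemma eps_stationary_if_small_step:
  assumes eps: "0 < eps" and small: "2 * rho\<^sup>2 * real (card K) * step_sq t \<le> eps\<^sup>2"
  shows "eps_stationary f0 f X0 X K lam beta eps (x0 (Suc t)) (xk (Suc t)) (xb (Suc t)) (z (Suc t))"
proof -
  have le_eps: "x \<le> eps" if "x\<^sup>2 \<le> rho\<^sup>2 * (2 * real (card K) * step_sq t)" for x
    using power2_le_imp_le[of x eps] that small eps by (simp add: algebra_simps)
  have dz: "rho * norm (z (Suc t) k - z t k) \<le> eps" if "k \<in> K" for k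
    using z_step_sq_le[OF that, of t] by (intro le_eps) (simp add: power_mult_distrib mult_left_mono)
  show ?thesis
    unfolding eps_stationary_def
  proof (intro exI[of _ "y (Suc t)"] conjI ballI)
    show "lam k + beta *\<^sub>R z (Suc t) k + y (Suc t) k = 0" if "k \<in> K" for k
      using that by (rule multiplier_invariant)
    show "\<exists>d0\<in>msum (msum (lsubdiff f0 (x0 (Suc t))) {\<Sum>k\<in>K. y (Suc t) k}) (lnormal X0 (x0 (Suc t))).
        norm d0 \<le> eps"
      using x0_residual_mem_subdiff[of t] le_eps[OF x0_residual_sq_le] by blast
    show "norm (x0 (Suc t) - xb (Suc t) k + z (Suc t) k) \<le> eps" if "k \<in> K" for k
      using primal_residual_le[OF that, of t] dz[OF that] by linarith
  next
    fix k
    assume k: "k \<in> K"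
    have "norm (0 :: 'b, rho *\<^sub>R (z t k - z (Suc t) k)) \<le> eps"
      using dz[OF k] rho_pos by (simp add: norm_minus_commute)
    then show "\<exists>g\<in>lsubdiff (f k) (xk (Suc t) k).
        \<exists>dk\<in>msum {(g, - y (Suc t) k)} (lnormal (X k) (xk (Suc t) k, xb (Suc t) k)). norm dk \<le> eps"
      using xk_residual_mem_subdiff[OF k, of t] by blast
  qed
qed

section \<open>Iteration complexity\<close>

lemma exists_small_step_before:
  assumes "0 < N" and lower: "\<And>t. Llow \<le> auglag t"
  shows "\<exists>t<N. descent_const * real N * step_sq t \<le> auglag 0 - Llow"
proof -
  have "finite (step_sq ` {..<N})" "step_sq ` {..<N} \<noteq> {}"
    using \<open>0 < N\<close> by auto
  then obtain t where "t < N" and t_min: "step_sq t = Min (step_sq ` {..<N})"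
    by (metis Min_in imageE lessThan_iff)
  have "real N * step_sq t \<le> (\<Sum>s<N. step_sq s)"
    using sum_bounded_below[of "{..<N}" "step_sq t" step_sq] unfolding t_min by simp
  then have "descent_const * real N * step_sq t \<le> descent_const * (\<Sum>s<N. step_sq s)"
    using descent_const_pos by (simp add: mult.assoc)
  also have "\<dots> \<le> auglag 0 - Llow"
    using step_sq_sum_le[of N] lower[of N] by linarith
  finally show ?thesis
    using \<open>t < N\<close> by blast
qed

lemma eps_stationary_within:
  assumes eps: "0 < eps" and lower: "\<And>t. Llow \<le> auglag t"
  shows "\<exists>t. 1 \<le> t \<and> t \<le> max 1 (nat \<lceil>2 * rho\<^sup>2 * real (card K) * (auglag 0 - Llow) / descent_const * (1 / eps\<^sup>2)\<rceil>)
    \<and> eps_stationary f0 f X0 X K lam beta eps (x0 t) (xk t) (xb t) (z t)"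
proof -
  define C where "C = 2 * rho\<^sup>2 * real (card K)"
  define N where "N = max 1 (nat \<lceil>C * (auglag 0 - Llow) / descent_const * (1 / eps\<^sup>2)\<rceil>)"
  have "0 < N" by (simp add: N_def)
  have N_ge: "C * (auglag 0 - Llow) / descent_const * (1 / eps\<^sup>2) \<le> real N"
    using real_nat_ceiling_ge[of "C * (auglag 0 - Llow) / descent_const * (1 / eps\<^sup>2)"]
    unfolding N_def by (simp add: of_nat_max)
  obtain t where "t < N" and small: "descent_const * real N * step_sq t \<le> auglag 0 - Llow"
    using exists_small_step_before[OF \<open>0 < N\<close> lower] by blast
  have "C * step_sq t * (descent_const * real N) \<le> C * (auglag 0 - Llow)"
    using mult_left_mono[OF small, of C] by (simp add: C_def mult_ac)
  also have "\<dots> = C * (auglag 0 - Llow) / descent_const * (1 / eps\<^sup>2) * (descent_const * eps\<^sup>2)"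
    using descent_const_pos eps by (simp add: field_simps)
  also have "\<dots> \<le> real N * (descent_const * eps\<^sup>2)"
    by (rule mult_right_mono[OF N_ge]) (use descent_const_pos in simp)
  also have "\<dots> = eps\<^sup>2 * (descent_const * real N)"
    by (metis mult.commute mult.left_commute)
  finally have "C * step_sq t \<le> eps\<^sup>2"
    by (rule mult_right_le_imp_le) (use descent_const_pos \<open>0 < N\<close> in simp)
  then have "eps_stationary f0 f X0 X K lam beta eps (x0 (Suc t)) (xk (Suc t)) (xb (Suc t)) (z (Suc t))"
    unfolding C_def by (rule eps_stationary_if_small_step[OF eps])
  then show ?thesis
    using \<open>t < N\<close> unfolding N_def C_def by (intro exI[of _ "Suc t"]) auto
qed

end

lemma INF_box_le_sum_mono:
  fixes c :: "'g \<Rightarrow> 'a::order \<Rightarrow> 'b::{conditionally_complete_lattice, ordered_comm_monoid_add}"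
  assumes "\<forall>g\<in>G. mono (c g)" and "\<forall>g\<in>G. lo g \<le> p g \<and> p g \<le> hi g"
  shows "(INF q \<in> {q. \<forall>g\<in>G. lo g \<le> q g \<and> q g \<le> hi g}. \<Sum>g\<in>G. c g (q g)) \<le> (\<Sum>g\<in>G. c g (p g))"
proof -
  have "(\<Sum>g\<in>G. c g (lo g)) \<le> (\<Sum>g\<in>G. c g (q g))" if "q \<in> {q. \<forall>g\<in>G. lo g \<le> q g \<and> q g \<le> hi g}" for q
    by (rule sum_mono) (use assms(1) that in \<open>auto simp: mono_def\<close>)
  then have "bdd_below ((\<lambda>q. \<Sum>g\<in>G. c g (q g)) ` {q. \<forall>g\<in>G. lo g \<le> q g \<and> q g \<le> hi g})"
    by (rule bdd_belowI2)
  moreover have "p \<in> {q. \<forall>g\<in>G. lo g \<le> q g \<and> q g \<le> hi g}"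
    using assms(2) by simp
  ultimately show ?thesis
    by (rule cINF_lower)
qed

theorem theorem1:
  fixes G :: "'g set" and e :: "'g \<Rightarrow> 'a::euclidean_space"
    and plo phi :: "'g \<Rightarrow> real" and c :: "'g \<Rightarrow> real \<Rightarrow> real"
    and J0 :: "'j set" and s0 :: "'j \<Rightarrow> 'a" and h0 :: "'j \<Rightarrow> real \<Rightarrow> real"
    and K :: "'k set" and J :: "'k \<Rightarrow> 'j set" and s :: "'k \<Rightarrow> 'j \<Rightarrow> 'b::euclidean_space"
    and h :: "'k \<Rightarrow> 'j \<Rightarrow> real \<Rightarrow> real"
    and delta :: real
    and X0 :: "'a set" and X :: "'k \<Rightarrow> ('b \<times> 'a) set"
    and f0 :: "'a \<Rightarrow> real" and f :: "'k \<Rightarrow> 'b \<Rightarrow> real"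
    and beta tau rho gamma eps :: real
    and lam :: "'k \<Rightarrow> 'a"
    and x0 :: "nat \<Rightarrow> 'a" and xk :: "nat \<Rightarrow> 'k \<Rightarrow> 'b"
    and xb z y :: "nat \<Rightarrow> 'k \<Rightarrow> 'a"
  assumes finG: "finite G" and finK: "finite K" and finJ0: "finite J0"
    and finJ: "\<forall>k\<in>K. finite (J k)"
    \<comment> \<open>base case active powers are (distinct) coordinates of x0\<close>
    and e_basis: "\<forall>g\<in>G. e g \<in> Basis" and e_inj: "inj_on e G"
    and p_bounds: "\<forall>g\<in>G. plo g \<le> phi g"
    and c_cost: "\<forall>g\<in>G. cvx_pwl_incr (c g)"
    \<comment> \<open>penalty costs: sums of convex pwl increasing functions of nonnegative slacks\<close>
    and s0_basis: "\<forall>j\<in>J0. s0 j \<in> Basis" and h0_cost: "\<forall>j\<in>J0. cvx_pwl_incr (h0 j)"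
    and s_basis: "\<forall>k\<in>K. \<forall>j\<in>J k. s k j \<in> Basis"
    and h_cost: "\<forall>k\<in>K. \<forall>j\<in>J k. cvx_pwl_incr (h k j)"
    and delta: "0 \<le> delta" "delta \<le> 1"
    \<comment> \<open>feasible sets\<close>
    and X0_closed: "closed X0" and X_closed: "\<forall>k\<in>K. closed (X k)"
    and X0_box: "\<forall>x\<in>X0. \<forall>g\<in>G. plo g \<le> x \<bullet> e g \<and> x \<bullet> e g \<le> phi g"
    and X0_slack: "\<forall>x\<in>X0. \<forall>j\<in>J0. 0 \<le> x \<bullet> s0 j"
    and X_slack: "\<forall>k\<in>K. \<forall>(v, vb)\<in>X k. \<forall>j\<in>J k. 0 \<le> v \<bullet> s k j"
    and c0_nonneg: "\<forall>x\<in>X0. 0 \<le> (\<Sum>j\<in>J0. h0 j (x \<bullet> s0 j))"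
    and ck_nonneg: "\<forall>k\<in>K. \<forall>(v, vb)\<in>X k. 0 \<le> (\<Sum>j\<in>J k. h k j (v \<bullet> s k j))"
    \<comment> \<open>costs\<close>
    and f0_def: "f0 = (\<lambda>x. (\<Sum>g\<in>G. c g (x \<bullet> e g)) + delta * (\<Sum>j\<in>J0. h0 j (x \<bullet> s0 j)))"
    and f_def: "\<forall>k\<in>K. f k = (\<lambda>v. (1 - delta) * (1 / real (card K)) * (\<Sum>j\<in>J k. h k j (v \<bullet> s k j)))"
    \<comment> \<open>parameters\<close>
    and beta: "beta > 1" and tau: "tau > 1" and rho: "rho = tau * beta"
    and eps: "eps > 0" and gamma: "gamma > 0"
    \<comment> \<open>initialization\<close>
    and init0: "x0 0 \<in> X0" and initk: "\<forall>k\<in>K. (xk 0 k, xb 0 k) \<in> X k"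
    and inity: "\<forall>k\<in>K. lam k + beta *\<^sub>R z 0 k + y 0 k = 0"
    \<comment> \<open>base case update: stationary point with descent\<close>
    and x0_stat: "\<forall>t. stationary_on
        (\<lambda>v. f0 v + (\<Sum>k\<in>K. inner (y t k) v + rho / 2 * (norm (v - xb t k + z t k))\<^sup>2))
        X0 (x0 (Suc t))"
    and x0_desc: "\<forall>t.
        f0 (x0 (Suc t)) + (\<Sum>k\<in>K. inner (y t k) (x0 (Suc t)) + rho / 2 * (norm (x0 (Suc t) - xb t k + z t k))\<^sup>2)
        \<le> f0 (x0 t) + (\<Sum>k\<in>K. inner (y t k) (x0 t) + rho / 2 * (norm (x0 t - xb t k + z t k))\<^sup>2)"
    \<comment> \<open>contingency updates: stationary points with sufficient descent\<close>
    and xk_stat: "\<forall>t. \<forall>k\<in>K. stationary_on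
        (\<lambda>(v, vb). f k v - inner (y t k) vb + rho / 2 * (norm (x0 (Suc t) - vb + z t k))\<^sup>2)
        (X k) (xk (Suc t) k, xb (Suc t) k)"
    and xk_desc: "\<forall>t. \<forall>k\<in>K.
        f k (xk (Suc t) k) - inner (y t k) (xb (Suc t) k) + rho / 2 * (norm (x0 (Suc t) - xb (Suc t) k + z t k))\<^sup>2
        \<le> f k (xk t k) - inner (y t k) (xb t k) + rho / 2 * (norm (x0 (Suc t) - xb t k + z t k))\<^sup>2
           - gamma * beta * (norm (xb (Suc t) k - xb t k))\<^sup>2"
    \<comment> \<open>slack and multiplier updates\<close>
    and z_upd: "\<forall>t. \<forall>k\<in>K. z (Suc t) k =
        (1 / (beta + rho)) *\<^sub>R (rho *\<^sub>R (xb (Suc t) k - x0 (Suc t)) - lam k - y t k)"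
    and y_upd: "\<forall>t. \<forall>k\<in>K. y (Suc t) k = y t k + rho *\<^sub>R (x0 (Suc t) - xb (Suc t) k + z (Suc t) k)"
  shows "let
      Lbar = f0 (x0 0) + (\<Sum>k\<in>K. f k (xk 0 k) + inner (lam k) (z 0 k) + beta / 2 * (norm (z 0 k))\<^sup>2)
             + (\<Sum>k\<in>K. inner (y 0 k) (x0 0 - xb 0 k + z 0 k) + rho / 2 * (norm (x0 0 - xb 0 k + z 0 k))\<^sup>2);
      Lund = (INF p \<in> {p. \<forall>g\<in>G. plo g \<le> p g \<and> p g \<le> phi g}. \<Sum>g\<in>G. c g (p g))
             - (\<Sum>k\<in>K. (norm (lam k))\<^sup>2) / beta;
      T = nat \<lceil>2 * rho\<^sup>2 * real (card K) * (Lbar - Lund)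
               / min (gamma * beta) ((beta + rho) / 2 - beta\<^sup>2 / rho) * (1 / eps\<^sup>2)\<rceil>
    in \<exists>t. 1 \<le> t \<and> t \<le> max 1 T \<and>
         eps_stationary f0 f X0 X K lam beta eps (x0 t) (xk t) (xb t) (z t)"
proof -
  have "beta < rho"
    using beta tau rho by simp
  interpret alr_admm f0 f X0 X K lam beta rho gamma x0 xk xb z y
    using finK beta \<open>beta < rho\<close> gamma init0 initk inity x0_stat x0_desc xk_stat xk_desc z_upd y_upd
    by unfold_locales blast+
  have f0_lower: "(INF p \<in> {p. \<forall>g\<in>G. plo g \<le> p g \<and> p g \<le> phi g}. \<Sum>g\<in>G. c g (p g)) \<le> f0 x"
    if "x \<in> X0" for x
  proof -
    have "(INF p \<in> {p. \<forall>g\<in>G. plo g \<le> p g \<and> p g \<le> phi g}. \<Sum>g\<in>G. c g (p g)) \<le> (\<Sum>g\<in>G. c g (x \<bullet> e g))"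
      using c_cost X0_box that by (intro INF_box_le_sum_mono) (auto simp: cvx_pwl_incr_def)
    moreover have "0 \<le> delta * (\<Sum>j\<in>J0. h0 j (x \<bullet> s0 j))"
      using delta c0_nonneg that by simp
    ultimately show ?thesis
      unfolding f0_def by simp
  qed
  have f_nonneg: "0 \<le> f k v" if "k \<in> K" "(v, vb) \<in> X k" for k v vb
    using f_def ck_nonneg delta that by fastforce
  have "auglag 0 = f0 (x0 0) + (\<Sum>k\<in>K. f k (xk 0 k) + inner (lam k) (z 0 k) + beta / 2 * (norm (z 0 k))\<^sup>2)
      + (\<Sum>k\<in>K. inner (y 0 k) (x0 0 - xb 0 k + z 0 k) + rho / 2 * (norm (x0 0 - xb 0 k + z 0 k))\<^sup>2)"
    by (simp add: aug_lagrangian_def lagr_term_def sum.distrib add.assoc)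
  then show ?thesis
    using eps_stationary_within[OF eps aug_lagrangian_lower_bound[OF f0_lower f_nonneg]]
    unfolding Let_def descent_const_def by simp
qed

end
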